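(* For every nonnegative integer $n$ and complex parameters $\alpha,a,b,\beta,\gamma,u,v$ (with all denominators nonzero), \begin{align*} \sum_{k=0}^{n} \frac{(q^{-n}, \alpha q^n, \alpha \beta ab/q, \alpha \gamma ab/q ; q)_k\, q^k}{(q, \alpha a, \alpha b, \beta \gamma uv; q)_k} A_k =\frac{(q/a, q/b; q)_n}{(\alpha a, \alpha b; q)_n}\biggl(\frac{\alpha ab}{q}\biggr)^n\sum_{k=0}^{n} \frac{(q^{-n}, \alpha q^n, \beta, \gamma; q)_k\, q^k}{(q, q/a, q/b, \beta \gamma uv; q)_k}B_k, \end{align*} where \[ A_k= {}_3\phi_2 \biggl({{q^{-k}, \alpha ab/(qu), \alpha ab/(qv)}\atop{\alpha \beta ab/q, \alpha \gamma ab/q }}; q, \beta \gamma uv q^k \biggr),\qquad B_k={}_3\phi_2 \biggl({{q^{-k}, 1/u, 1/v}\atop{\beta, \gamma}}; q, \beta \gamma uv q^k\biggr). \]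
   Context: Throughout, $q$ is a complex number with $0<|q|<1$. For $x\in\mathbb{C}$ and an integer $n\ge 0$, $(x;q)_n=\prod_{k=0}^{n-1}(1-xq^k)$, and $(x_1,\dots,x_m;q)_n=(x_1;q)_n\cdots(x_m;q)_n$. The basic hypergeometric series is ${}_r\phi_s\Bigl({{a_1,\dots,a_r}\atop{b_1,\dots,b_s}};q,z\Bigr)=\sum_{n=0}^\infty \frac{(a_1,\dots,a_r;q)_n}{(q,b_1,\dots,b_s;q)_n}\bigl((-1)^nq^{n(n-1)/2}\bigr)^{1+s-r}z^n$; with an upper parameter $q^{-k}$ it is a finite sum. *)

theory Defs
  imports Complex_Main
begin

definition qpoch :: "complex \<Rightarrow> complex \<Rightarrow> nat \<Rightarrow> complex" where
  "qpoch x q n = (\<Prod>k<n. 1 - x * q ^ k)"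

definition qpochs :: "complex list \<Rightarrow> complex \<Rightarrow> nat \<Rightarrow> complex" where
  "qpochs xs q n = prod_list (map (\<lambda>x. qpoch x q n) xs)"

definition bhs :: "complex list \<Rightarrow> complex list \<Rightarrow> complex \<Rightarrow> complex \<Rightarrow> complex" where
  "bhs as bs q z = (\<Sum>n. qpochs as q n / (qpoch q q n * qpochs bs q n)
      * ((-1) ^ n * q ^ (n * (n - 1) div 2)) powi (1 + int (length bs) - int (length as))
      * z ^ n)"

end

(* With c = alpha a b / q and the weights w_k(x, y) = (q^-n, alpha q^n; q)_k q^k / (q, x, y; q)_k,
   exchanging the order of summation and evaluating the inner sum by the q-Pfaff-Saalschuetz
   formula shows, for every sequence h,
     sum_k w_k(alpha a, alpha b) h_k = P c^n sum_k w_k(q/a, q/b) (T h)_k,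
   where P = (q/a, q/b; q)_n / (alpha a, alpha b; q)_n and T is the q-binomial transform
   (T h)_k = sum_i [k, i]_q (1/c; q)_(k-i) c^-i h_i.
   It therefore suffices that T maps the left summands (beta c, gamma c; q)_k A_k / (beta gamma u v; q)_k
   to the right summands (beta, gamma; q)_k B_k / (beta gamma u v; q)_k. A 3phi2 transformation
   (derived from an expansion of (p; q)_j) together with q-Vandermonde expands both in the sequences
   i |-> [i, t]_q (X; q)_(i-t) (Y; q)_(i-t) / (beta gamma u v; q)_i, on which T acts by Saalschuetz's
   formula again; the two coefficient sequences differ exactly by the factor c^-t that T introduces.
   For alpha = 0 both sides collapse by the terminating q-binomial theorem. *)

theory Submission
  imports Defs
begin

lemma qpoch_0 [simp]: "qpoch x q 0 = 1"
  by (simp add: qpoch_def)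

lemma qpoch_Suc: "qpoch x q (Suc n) = qpoch x q n * (1 - x * q ^ n)"
  by (simp add: qpoch_def)

lemma qpoch_add: "qpoch x q (m + n) = qpoch x q m * qpoch (x * q ^ m) q n"
  by (induction n) (simp_all add: qpoch_Suc power_add mult_ac)

lemma qpoch_Suc': "qpoch x q (Suc n) = (1 - x) * qpoch (x * q) q n"
  using qpoch_add[of x q 1 n] by (simp add: qpoch_def)

lemma qpoch_split: "k \<le> n \<Longrightarrow> qpoch x q n = qpoch x q k * qpoch (x * q ^ k) q (n - k)"
  using qpoch_add[of x q k "n - k"] by simp

lemma qpoch_nonzero_le: "qpoch x q n \<noteq> 0 \<Longrightarrow> k \<le> n \<Longrightarrow> qpoch x q k \<noteq> 0"
  using qpoch_split[of k n x q] by auto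

lemma qpoch_zero_left [simp]: "qpoch 0 q k = 1"
  by (simp add: qpoch_def)

lemma qpoch_inverse_power_eq_0: "q \<noteq> 0 \<Longrightarrow> n < k \<Longrightarrow> qpoch (1 / q ^ n) q k = 0"
  unfolding qpoch_def by (intro prod_zero) (auto intro!: bexI[of _ n])

lemma qpoch_q_nonzero_if_norm_less_1:
  assumes "cmod q < 1"
  shows "qpoch q q n \<noteq> 0"
proof -
  have "q * q ^ k \<noteq> 1" for k
  proof
    assume "q * q ^ k = 1"
    then have "cmod q ^ Suc k = 1"
      by (metis norm_one norm_power power_Suc)
    moreover have "cmod q ^ Suc k < 1"
      using assms by (cases "q = 0") (simp_all add: power_Suc_less_one del: power_Suc)
    ultimately show False
      by simp
  qed
  then show ?thesis
    unfolding qpoch_def by simp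
qed

definition tri :: "nat \<Rightarrow> nat" where
  "tri j = j * (j - 1) div 2"

lemma tri_0 [simp]: "tri 0 = 0"
  by (simp add: tri_def)

lemma tri_Suc: "tri (Suc j) = tri j + j"
proof -
  have "Suc j * j = j * (j - 1) + 2 * j"
    by (cases j) auto
  then show ?thesis
    unfolding tri_def by simp
qed

lemma double_tri_plus: "2 * tri j + j = j * j"
  by (induction j) (simp_all add: tri_Suc)

lemma power_mult_power_diff:
  fixes K M w :: "'a :: comm_monoid_mult"
  assumes "j \<le> t" "K * M = w"
  shows "w ^ j * K ^ (t - j) = K ^ t * M ^ j"
proof -
  have "K ^ t = K ^ j * K ^ (t - j)"
    using assms(1) power_add[of K j "t - j"] by simp
  then show ?thesis
    by (simp add: power_mult_distrib ac_simps flip: assms(2))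
qed

lemma sum_atMost_reflect:
  fixes f :: "nat \<Rightarrow> 'a::comm_monoid_add"
  shows "(\<Sum>k\<le>m. f k) = (\<Sum>k\<le>m. f (m - k))"
  using sum.atLeastAtMost_rev[of f 0 m] by (simp add: atLeast0AtMost)

lemma sum_atMost_triangle:
  fixes G :: "nat \<Rightarrow> nat \<Rightarrow> 'a::comm_monoid_add"
  shows "(\<Sum>j\<le>i. \<Sum>l\<le>i - j. G j l) = (\<Sum>t\<le>i. \<Sum>j\<le>t. G j (t - j))"
proof -
  have "(\<Sum>j\<le>i. \<Sum>l\<le>i - j. G j l) = (\<Sum>(j, l)\<in>(SIGMA j:{..i}. {..i - j}). G j l)"
    by (rule sum.Sigma) auto
  also have "(SIGMA j:{..i}. {..i - j}) = {(j, l). j + l \<le> i}"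
    by auto
  finally show ?thesis
    by (simp add: sum.triangle_reindex_eq)
qed

lemma sum_atMost_triangle':
  fixes G :: "nat \<Rightarrow> nat \<Rightarrow> 'a::comm_monoid_add"
  shows "(\<Sum>j\<le>i. \<Sum>l\<le>j. G l j) = (\<Sum>l\<le>i. \<Sum>m\<le>i - l. G l (l + m))"
  unfolding sum_atMost_triangle by (intro sum.cong refl) simp

lemma sum_atMost_vanishing_prefix:
  fixes F :: "nat \<Rightarrow> 'a::comm_monoid_add"
  assumes "t \<le> k" "\<And>i. i < t \<Longrightarrow> F i = 0"
  shows "(\<Sum>i\<le>k. F i) = (\<Sum>m\<le>k - t. F (t + m))"
proof -
  have "{..k} = {..<t} \<union> {t..k}"
    using assms(1) by auto
  then have "(\<Sum>i\<le>k. F i) = (\<Sum>i<t. F i) + (\<Sum>i = t..k. F i)"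
    by (simp add: sum.union_disjoint ivl_disj_int)
  also have "(\<Sum>i = t..k. F i) = (\<Sum>m\<le>k - t. F (t + m))"
    using assms(1) sum.shift_bounds_cl_nat_ivl[of F 0 t "k - t"] by (simp add: atLeast0AtMost add.commute)
  finally show ?thesis
    using assms(2) by simp
qed

definition qbinom :: "complex \<Rightarrow> nat \<Rightarrow> nat \<Rightarrow> complex" where
  "qbinom q n k = (if k \<le> n then qpoch q q n / (qpoch q q k * qpoch q q (n - k)) else 0)"

definition phi32 :: "complex \<Rightarrow> nat \<Rightarrow> complex \<Rightarrow> complex \<Rightarrow> complex \<Rightarrow> complex \<Rightarrow> complex \<Rightarrow> complex" where
  "phi32 q k x y d e z = (\<Sum>j\<le>k. qpoch (1 / q ^ k) q j * qpoch x q j * qpoch y q j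
      / (qpoch q q j * qpoch d q j * qpoch e q j) * z ^ j)"

lemma bhs_eq_phi32:
  assumes "q \<noteq> 0"
  shows "bhs [1 / q ^ k, x, y] [d, e] q z = phi32 q k x y d e z"
proof -
  have "bhs [1 / q ^ k, x, y] [d, e] q z
      = (\<Sum>j. qpoch (1 / q ^ k) q j * qpoch x q j * qpoch y q j / (qpoch q q j * qpoch d q j * qpoch e q j) * z ^ j)"
    unfolding bhs_def qpochs_def by (simp add: mult_ac)
  also have "\<dots> = phi32 q k x y d e z"
    unfolding phi32_def using assms by (intro suminf_finite) (auto simp: qpoch_inverse_power_eq_0)
  finally show ?thesis .
qed

definition qweight :: "complex \<Rightarrow> nat \<Rightarrow> complex \<Rightarrow> complex \<Rightarrow> complex \<Rightarrow> nat \<Rightarrow> complex" where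
  "qweight q n \<alpha> x y k = qpoch (1 / q ^ n) q k * qpoch (\<alpha> * q ^ n) q k * q ^ k / (qpoch q q k * qpoch x q k * qpoch y q k)"

definition qbinom_transform :: "complex \<Rightarrow> complex \<Rightarrow> (nat \<Rightarrow> complex) \<Rightarrow> nat \<Rightarrow> complex" where
  "qbinom_transform q c h k = (\<Sum>i\<le>k. qbinom q k i * qpoch (1 / c) q (k - i) * (1 / c) ^ i * h i)"

lemma qbinom_transform_cong:
  "(\<And>i. i \<le> k \<Longrightarrow> h i = h' i) \<Longrightarrow> qbinom_transform q c h k = qbinom_transform q c h' k"
  unfolding qbinom_transform_def by (intro sum.cong) auto

lemma qbinom_transform_linear:
  "qbinom_transform q c (\<lambda>i. \<Sum>t\<in>T. h t i * a t) k = (\<Sum>t\<in>T. qbinom_transform q c (h t) k * a t)"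
  unfolding qbinom_transform_def sum_distrib_left sum_distrib_right
  by (subst sum.swap) (simp add: mult_ac)

(* The first assumption says that q is not a root of unity. *)
locale q_base =
  fixes q :: complex
  assumes qpoch_q_nonzero: "qpoch q q n \<noteq> 0"
    and q_nonzero: "q \<noteq> 0"

context q_base
begin

lemma power_neq_1: "0 < m \<Longrightarrow> q ^ m \<noteq> 1"
  using qpoch_q_nonzero[of m] by (cases m) (auto simp: qpoch_Suc)

lemma qbinom_0 [simp]: "qbinom q n 0 = 1"
  using qpoch_q_nonzero by (simp add: qbinom_def)

lemma qbinom_self [simp]: "qbinom q n n = 1"
  using qpoch_q_nonzero by (simp add: qbinom_def)

lemma qbinom_eq_0 [simp]: "n < k \<Longrightarrow> qbinom q n k = 0"
  by (simp add: qbinom_def)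

lemma qbinom_symmetric: "k \<le> n \<Longrightarrow> qbinom q n (n - k) = qbinom q n k"
  by (simp add: qbinom_def mult.commute)

lemma qbinom_mult:
  "j \<le> k \<Longrightarrow> k \<le> n \<Longrightarrow> qbinom q n k * qbinom q k j = qbinom q n j * qbinom q (n - j) (k - j)"
  using qpoch_q_nonzero by (simp add: qbinom_def divide_simps)

lemma qbinom_Suc_factors:
  assumes "k < n"
  obtains D where "qbinom q (Suc n) (Suc k) = D * (1 - q ^ Suc n)"
    and "qbinom q n k = D * (1 - q ^ Suc k)"
    and "qbinom q n (Suc k) = D * (1 - q ^ (n - k))"
proof
  define D where "D = qpoch q q n / (qpoch q q (Suc k) * qpoch q q (n - k))"
  have Q_Suc_k: "qpoch q q (Suc k) = qpoch q q k * (1 - q ^ Suc k)"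
    by (simp add: qpoch_Suc)
  have Q_n_k: "qpoch q q (n - k) = qpoch q q (n - Suc k) * (1 - q ^ (n - k))"
    using assms by (metis Suc_diff_Suc power_Suc qpoch_Suc)
  have "1 - q ^ Suc k \<noteq> 0" "1 - q ^ (n - k) \<noteq> 0"
    using power_neq_1[of "Suc k"] power_neq_1[of "n - k"] assms by auto
  moreover have "qpoch q q k \<noteq> 0" "qpoch q q (n - Suc k) \<noteq> 0"
    by (rule qpoch_q_nonzero)+
  ultimately have nonzero: "qpoch q q (Suc k) \<noteq> 0" "qpoch q q (n - k) \<noteq> 0"
    unfolding Q_Suc_k Q_n_k by simp_all
  show "qbinom q (Suc n) (Suc k) = D * (1 - q ^ Suc n)"
    using assms by (simp add: qbinom_def D_def qpoch_Suc)
  show "qbinom q n k = D * (1 - q ^ Suc k)"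
    using assms \<open>1 - q ^ Suc k \<noteq> 0\<close> nonzero
    by (simp add: qbinom_def D_def Q_Suc_k field_simps)
  show "qbinom q n (Suc k) = D * (1 - q ^ (n - k))"
    using assms \<open>1 - q ^ (n - k) \<noteq> 0\<close> nonzero
    by (simp add: qbinom_def D_def Q_n_k field_simps)
qed

lemma qbinom_Pascal:
  assumes "k \<le> n"
  shows "qbinom q (Suc n) (Suc k) = qbinom q n k + q ^ Suc k * qbinom q n (Suc k)"
proof (cases "k = n")
  case False
  then obtain D where A: "qbinom q (Suc n) (Suc k) = D * (1 - q ^ Suc n)"
    and B: "qbinom q n k = D * (1 - q ^ Suc k)" and C: "qbinom q n (Suc k) = D * (1 - q ^ (n - k))"
    using assms qbinom_Suc_factors[of k n] by auto
  have "q ^ k * q ^ (n - k) = q ^ n"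
    using assms by (simp flip: power_add)
  then show ?thesis
    unfolding A B C by (simp add: algebra_simps)
qed simp

lemma qbinom_Pascal':
  assumes "k \<le> n"
  shows "qbinom q (Suc n) (Suc k) = qbinom q n (Suc k) + q ^ (n - k) * qbinom q n k"
proof (cases "k = n")
  case False
  then obtain D where A: "qbinom q (Suc n) (Suc k) = D * (1 - q ^ Suc n)"
    and B: "qbinom q n k = D * (1 - q ^ Suc k)" and C: "qbinom q n (Suc k) = D * (1 - q ^ (n - k))"
    using assms qbinom_Suc_factors[of k n] by auto
  have "q ^ k * q ^ (n - k) = q ^ n"
    using assms by (simp flip: power_add)
  then show ?thesis
    unfolding A B C by (simp add: algebra_simps)
qed simp

lemma sum_qbinom_Suc:
  "(\<Sum>m\<le>Suc M. qbinom q (Suc M) m * F m) = (\<Sum>m\<le>M. qbinom q M m * (q ^ m * F m + F (Suc m)))"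
proof -
  have "(\<Sum>m\<le>Suc M. qbinom q (Suc M) m * F m) = F 0 + (\<Sum>m\<le>M. qbinom q (Suc M) (Suc m) * F (Suc m))"
    by (subst sum.atMost_Suc_shift) simp
  also have "\<dots> = F 0 + (\<Sum>m\<le>M. qbinom q M m * F (Suc m)) + (\<Sum>m<M. q ^ Suc m * qbinom q M (Suc m) * F (Suc m))"
    by (simp add: qbinom_Pascal sum.distrib algebra_simps flip: lessThan_Suc_atMost)
  moreover have "F 0 + (\<Sum>m<M. q ^ Suc m * qbinom q M (Suc m) * F (Suc m)) = (\<Sum>m\<le>M. qbinom q M m * q ^ m * F m)"
    by (simp add: sum.atMost_shift mult_ac)
  ultimately show ?thesis
    by (simp add: sum.distrib algebra_simps)
qed

lemma sum_qbinom_Suc':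
  "(\<Sum>m\<le>Suc M. qbinom q (Suc M) m * F m) = (\<Sum>m\<le>M. qbinom q M m * (F m + q ^ (M - m) * F (Suc m)))"
proof -
  have "(\<Sum>m\<le>Suc M. qbinom q (Suc M) m * F m) = F 0 + (\<Sum>m\<le>M. qbinom q (Suc M) (Suc m) * F (Suc m))"
    by (subst sum.atMost_Suc_shift) simp
  also have "\<dots> = F 0 + (\<Sum>m<M. qbinom q M (Suc m) * F (Suc m)) + (\<Sum>m\<le>M. q ^ (M - m) * qbinom q M m * F (Suc m))"
    by (simp add: qbinom_Pascal' sum.distrib algebra_simps flip: lessThan_Suc_atMost)
  moreover have "F 0 + (\<Sum>m<M. qbinom q M (Suc m) * F (Suc m)) = (\<Sum>m\<le>M. qbinom q M m * F m)"
    by (simp add: sum.atMost_shift)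
  ultimately show ?thesis
    by (simp add: sum.distrib algebra_simps)
qed

lemma q_Vandermonde:
  "(\<Sum>m\<le>M. qbinom q M m * qpoch x q m * qpoch y q (M - m) * y ^ m) = qpoch (x * y) q M"
proof (induction M)
  case (Suc M)
  have step: "qbinom q M m * (qpoch x q m * qpoch y q (Suc M - m) * y ^ m
      + q ^ (M - m) * (qpoch x q (Suc m) * qpoch y q (M - m) * y ^ Suc m))
      = (1 - x * y * q ^ M) * (qbinom q M m * qpoch x q m * qpoch y q (M - m) * y ^ m)" if "m \<le> M" for m
  proof -
    have "Suc M - m = Suc (M - m)" "q ^ (M - m) * q ^ m = q ^ M"
      using that by (simp_all flip: power_add)
    then show ?thesis
      by (simp add: qpoch_Suc algebra_simps)
  qed
  have "(\<Sum>m\<le>Suc M. qbinom q (Suc M) m * qpoch x q m * qpoch y q (Suc M - m) * y ^ m)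
      = (\<Sum>m\<le>M. qbinom q M m * (qpoch x q m * qpoch y q (Suc M - m) * y ^ m
          + q ^ (M - m) * (qpoch x q (Suc m) * qpoch y q (M - m) * y ^ Suc m)))"
    using sum_qbinom_Suc'[of M "\<lambda>m. qpoch x q m * qpoch y q (Suc M - m) * y ^ m"]
    by (simp only: diff_Suc_Suc mult.assoc)
  also have "\<dots> = (1 - x * y * q ^ M) * (\<Sum>m\<le>M. qbinom q M m * qpoch x q m * qpoch y q (M - m) * y ^ m)"
    unfolding sum_distrib_left by (intro sum.cong refl) (rule step, simp)
  also have "\<dots> = qpoch (x * y) q (Suc M)"
    unfolding Suc.IH by (simp add: qpoch_Suc mult_ac)
  finally show ?case .
qed simp

lemma q_Vandermonde':
  "(\<Sum>m\<le>M. qbinom q M m * qpoch x q m * qpoch y q (M - m) * x ^ (M - m)) = qpoch (x * y) q M"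
proof -
  have "(\<Sum>m\<le>M. qbinom q M m * qpoch x q m * qpoch y q (M - m) * x ^ (M - m))
      = (\<Sum>m\<le>M. qbinom q M m * qpoch y q m * qpoch x q (M - m) * x ^ m)"
    by (subst sum_atMost_reflect) (intro sum.cong refl, auto simp: qbinom_symmetric mult_ac)
  also have "\<dots> = qpoch (x * y) q M"
    using q_Vandermonde[of M y x] by (simp add: mult.commute)
  finally show ?thesis .
qed

lemma sum_qbinom_nested:
  "(\<Sum>j\<le>i. \<Sum>l\<le>i - j. qbinom q i j * qbinom q (i - j) l * F j (j + l))
   = (\<Sum>t\<le>i. qbinom q i t * (\<Sum>j\<le>t. qbinom q t j * F j t))"
  unfolding sum_atMost_triangle sum_distrib_left
  by (intro sum.cong refl) (auto simp: qbinom_mult mult.assoc)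

lemma qpoch_expansion:
  "(\<Sum>l\<le>j. qbinom q j l * (-p) ^ l * q ^ tri l * qpoch b q l * qpoch (p * b * q ^ l) q (j - l))
   = qpoch p q j"
proof (induction j arbitrary: p)
  case (Suc j)
  have step: "qbinom q j l * (q ^ l * ((-p) ^ l * q ^ tri l * qpoch b q l * qpoch (p * b * q ^ l) q (Suc j - l))
      + (-p) ^ Suc l * q ^ tri (Suc l) * qpoch b q (Suc l) * qpoch (p * b * q ^ Suc l) q (j - l))
      = (1 - p) * (qbinom q j l * (-(p * q)) ^ l * q ^ tri l * qpoch b q l * qpoch (p * q * b * q ^ l) q (j - l))"
    if "l \<le> j" for l
  proof -
    have "Suc j - l = Suc (j - l)"
      using that by simp
    moreover have "qpoch (p * b * q ^ l) q (Suc (j - l)) = (1 - p * b * q ^ l) * qpoch (p * b * q ^ Suc l) q (j - l)"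
      by (simp add: qpoch_Suc' mult_ac)
    moreover have "(-(p * q)) ^ l = (-p) ^ l * q ^ l" "p * q * b * q ^ l = p * b * q ^ Suc l"
      by (simp_all add: power_mult_distrib[symmetric] mult_ac)
    moreover have "qpoch b q (Suc l) = qpoch b q l * (1 - b * q ^ l)"
      by (rule qpoch_Suc)
    ultimately show ?thesis
      by (simp only:) (simp add: tri_Suc power_add algebra_simps)
  qed
  have "(\<Sum>l\<le>Suc j. qbinom q (Suc j) l * (-p) ^ l * q ^ tri l * qpoch b q l * qpoch (p * b * q ^ l) q (Suc j - l))
      = (\<Sum>l\<le>j. qbinom q j l * (q ^ l * ((-p) ^ l * q ^ tri l * qpoch b q l * qpoch (p * b * q ^ l) q (Suc j - l))
          + (-p) ^ Suc l * q ^ tri (Suc l) * qpoch b q (Suc l) * qpoch (p * b * q ^ Suc l) q (j - l)))"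
    using sum_qbinom_Suc[of j "\<lambda>l. (-p) ^ l * q ^ tri l * qpoch b q l * qpoch (p * b * q ^ l) q (Suc j - l)"]
    by (simp add: mult.assoc)
  also have "\<dots> = (1 - p) * (\<Sum>l\<le>j. qbinom q j l * (-(p * q)) ^ l * q ^ tri l * qpoch b q l * qpoch (p * q * b * q ^ l) q (j - l))"
    unfolding sum_distrib_left by (intro sum.cong refl) (rule step, simp)
  finally show ?case
    by (simp add: Suc.IH qpoch_Suc')
qed simp

lemma q_Saalschuetz_qbinom:
  "(\<Sum>k\<le>n. qbinom q n k * qpoch a q k * qpoch b q k * qpoch (a * b * y * q ^ k) q (n - k) * qpoch y q (n - k) * y ^ k)
   = qpoch (a * y) q n * qpoch (b * y) q n"
proof -
  define F where "F k t = qpoch a q k * qpoch b q k * qpoch y q (n - k) * y ^ k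
      * qpoch (a * q ^ k) q (t - k) * qpoch (b * y) q (n - t) * (b * y) ^ (t - k)" for k t
  have F_factor: "F k t = qpoch a q t * qpoch y q (n - t) * y ^ t * qpoch (b * y) q (n - t)
      * (qpoch b q k * qpoch (y * q ^ (n - t)) q (t - k) * b ^ (t - k))" if "k \<le> t" "t \<le> n" for k t
  proof -
    have "qpoch a q t = qpoch a q k * qpoch (a * q ^ k) q (t - k)"
      using qpoch_split[OF \<open>k \<le> t\<close>] .
    moreover have "qpoch y q (n - k) = qpoch y q (n - t) * qpoch (y * q ^ (n - t)) q (t - k)"
      using qpoch_add[of y q "n - t" "t - k"] that by simp
    moreover have "y ^ k * (b * y) ^ (t - k) = y ^ t * b ^ (t - k)"
      using \<open>k \<le> t\<close> by (simp add: power_mult_distrib mult_ac flip: power_add)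
    ultimately show ?thesis
      unfolding F_def by (simp add: mult_ac)
  qed
  have "(\<Sum>k\<le>n. qbinom q n k * qpoch a q k * qpoch b q k * qpoch (a * b * y * q ^ k) q (n - k) * qpoch y q (n - k) * y ^ k)
      = (\<Sum>k\<le>n. \<Sum>l\<le>n - k. qbinom q n k * qbinom q (n - k) l * F k (k + l))"
  proof -
    have "qpoch (a * b * y * q ^ k) q (n - k)
        = (\<Sum>l\<le>n - k. qbinom q (n - k) l * qpoch (a * q ^ k) q l * qpoch (b * y) q (n - k - l) * (b * y) ^ l)" for k
      using q_Vandermonde[of "n - k" "a * q ^ k" "b * y"] by (simp add: mult_ac)
    then show ?thesis
      by (simp add: F_def sum_distrib_left mult_ac)
  qed
  also have "\<dots> = (\<Sum>t\<le>n. qbinom q n t * (\<Sum>k\<le>t. qbinom q t k * F k t))"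
    by (rule sum_qbinom_nested)
  also have "\<dots> = (\<Sum>t\<le>n. qbinom q n t * qpoch a q t * qpoch y q (n - t) * y ^ t * qpoch (b * y) q n)"
  proof (intro sum.cong refl)
    fix t
    assume "t \<in> {..n}"
    then have "t \<le> n"
      by simp
    have "(\<Sum>k\<le>t. qbinom q t k * F k t) = qpoch a q t * qpoch y q (n - t) * y ^ t * qpoch (b * y) q (n - t)
        * (\<Sum>k\<le>t. qbinom q t k * qpoch b q k * qpoch (y * q ^ (n - t)) q (t - k) * b ^ (t - k))"
      unfolding sum_distrib_left by (intro sum.cong refl) (simp add: F_factor \<open>t \<le> n\<close> mult_ac)
    also have "\<dots> = qpoch a q t * qpoch y q (n - t) * y ^ t * (qpoch (b * y) q (n - t) * qpoch (b * y * q ^ (n - t)) q t)"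
      using q_Vandermonde'[of t b "y * q ^ (n - t)"] by (simp add: mult_ac)
    also have "\<dots> = qpoch a q t * qpoch y q (n - t) * y ^ t * qpoch (b * y) q n"
      using qpoch_add[of "b * y" q "n - t" t] \<open>t \<le> n\<close> by simp
    finally show "qbinom q n t * (\<Sum>k\<le>t. qbinom q t k * F k t)
        = qbinom q n t * qpoch a q t * qpoch y q (n - t) * y ^ t * qpoch (b * y) q n"
      by (simp add: mult_ac)
  qed
  also have "\<dots> = qpoch (a * y) q n * qpoch (b * y) q n"
    using q_Vandermonde[of n a y] by (simp flip: sum_distrib_right)
  finally show ?thesis .
qed

lemma qpoch_reflect:
  assumes "m \<le> N" "y \<noteq> 0"
  shows "qpoch y q N * (-1) ^ m * q ^ (tri m + m) = qpoch (q / (y * q ^ N)) q m * qpoch y q (N - m) * y ^ m * q ^ (N * m)"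
  using assms(1)
proof (induction m)
  case (Suc m)
  have N_m: "N - m = Suc (N - Suc m)"
    using Suc.prems by simp
  have "q ^ (N - Suc m) * q ^ Suc m = q ^ N"
    using Suc.prems by (simp only: power_add[symmetric]) simp
  then have last_factor: "(1 - q / (y * q ^ N) * q ^ m) * y * q ^ N = -(q ^ Suc m) * (1 - y * q ^ (N - Suc m))"
    using assms(2) q_nonzero by (simp add: field_simps)
  have "qpoch (q / (y * q ^ N)) q (Suc m) * qpoch y q (N - Suc m) * y ^ Suc m * q ^ (N * Suc m)
      = qpoch (q / (y * q ^ N)) q m * qpoch y q (N - Suc m) * y ^ m * q ^ (N * m) * ((1 - q / (y * q ^ N) * q ^ m) * y * q ^ N)"
    by (simp add: qpoch_Suc power_add mult_ac)
  also have "\<dots> = -(q ^ Suc m) * (qpoch (q / (y * q ^ N)) q m * qpoch y q (N - m) * y ^ m * q ^ (N * m))"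
    unfolding last_factor N_m by (simp add: qpoch_Suc mult_ac)
  also have "\<dots> = qpoch y q N * (-1) ^ Suc m * q ^ (tri (Suc m) + Suc m)"
    using Suc by (simp add: tri_Suc power_add mult_ac)
  finally show ?case
    by simp
qed simp

lemma qpoch_inverse_power:
  assumes "m \<le> N"
  shows "qpoch (1 / q ^ N) q m = qbinom q N m * qpoch q q m * (-1) ^ m * q ^ tri m / q ^ (N * m)"
proof -
  have "qpoch q q N * (-1) ^ m * q ^ tri m * q ^ m = qpoch (1 / q ^ N) q m * qpoch q q (N - m) * q ^ (N * m) * q ^ m"
    using qpoch_reflect[OF assms, of q] q_nonzero by (simp add: power_add mult_ac)
  then have "qpoch q q N * (-1) ^ m * q ^ tri m = qpoch (1 / q ^ N) q m * qpoch q q (N - m) * q ^ (N * m)"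
    using q_nonzero by simp
  then show ?thesis
    using assms qpoch_q_nonzero[of "N - m"] qpoch_q_nonzero[of m] q_nonzero
    unfolding qbinom_def by (simp add: field_simps)
qed

lemma qpoch_reflect_product:
  assumes "y \<noteq> 0" "z \<noteq> 0"
  shows "qpoch (q / (y * q ^ N)) q N * qpoch (q / (z * q ^ N)) q N * (y * z * q ^ N / q) ^ N
    = qpoch y q N * qpoch z q N"
proof -
  define E where "E = (-1 :: complex) ^ N * q ^ (tri N + N)"
  have ry: "qpoch (q / (y * q ^ N)) q N = qpoch y q N * E / (y ^ N * q ^ (N * N))"
    and rz: "qpoch (q / (z * q ^ N)) q N = qpoch z q N * E / (z ^ N * q ^ (N * N))"
    using qpoch_reflect[of N N y] qpoch_reflect[of N N z] assms q_nonzero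
    unfolding E_def by (simp_all add: field_simps)
  have "tri N + N + (tri N + N) = N * N + N"
    using double_tri_plus[of N] by simp
  then have "q ^ (tri N + N) * q ^ (tri N + N) = q ^ (N * N) * q ^ N"
    by (simp only: power_add[symmetric])
  moreover have "(-1 :: complex) ^ N * (-1) ^ N = 1"
    by (simp flip: power_mult_distrib)
  moreover have "E * E = ((-1) ^ N * (-1) ^ N) * (q ^ (tri N + N) * q ^ (tri N + N))"
    unfolding E_def by (simp only: mult_ac)
  ultimately have EE: "E * E = q ^ (N * N) * q ^ N"
    by simp
  have "q ^ N * (y * z * q ^ N / q) ^ N = y ^ N * z ^ N * q ^ (N * N)"
    using q_nonzero by (simp add: power_mult_distrib power_divide power_mult[symmetric] field_simps)
  then have "E * E * (y * z * q ^ N / q) ^ N = y ^ N * z ^ N * q ^ (N * N) * q ^ (N * N)"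
    unfolding EE by (simp add: mult_ac)
  then show ?thesis
    unfolding ry rz using assms q_nonzero by (simp add: field_simps)
qed

lemma q_Saalschuetz:
  assumes "y \<noteq> 0" "qpoch (A * B * y) q N \<noteq> 0" "qpoch y q N \<noteq> 0"
  shows "(\<Sum>m\<le>N. qpoch (1 / q ^ N) q m * qpoch A q m * qpoch B q m * q ^ m
            / (qpoch q q m * qpoch (A * B * y) q m * qpoch (q / (y * q ^ N)) q m))
       = qpoch (A * y) q N * qpoch (B * y) q N / (qpoch (A * B * y) q N * qpoch y q N)"
proof -
  have summand: "qpoch (1 / q ^ N) q m * qpoch A q m * qpoch B q m * q ^ m
        / (qpoch q q m * qpoch (A * B * y) q m * qpoch (q / (y * q ^ N)) q m) * (qpoch (A * B * y) q N * qpoch y q N)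
      = qbinom q N m * qpoch A q m * qpoch B q m * qpoch (A * B * y * q ^ m) q (N - m) * qpoch y q (N - m) * y ^ m"
    if "m \<le> N" for m
  proof -
    have ABy: "qpoch (A * B * y) q N = qpoch (A * B * y) q m * qpoch (A * B * y * q ^ m) q (N - m)"
      using qpoch_split[OF that] .
    have "(-1 :: complex) ^ m * q ^ (tri m + m) \<noteq> 0"
      using q_nonzero by simp
    then have y_N: "qpoch y q N = qpoch (q / (y * q ^ N)) q m * qpoch y q (N - m) * y ^ m * q ^ (N * m) / ((-1) ^ m * q ^ (tri m + m))"
      using qpoch_reflect[OF that assms(1)] by (simp add: field_simps)
    have "qpoch (q / (y * q ^ N)) q m \<noteq> 0" "qpoch (A * B * y) q m \<noteq> 0"
      using assms(2,3) ABy y_N by auto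
    then show ?thesis
      unfolding qpoch_inverse_power[OF that] ABy y_N
      using qpoch_q_nonzero[of m] q_nonzero by (simp add: field_simps power_add)
  qed
  have "(\<Sum>m\<le>N. qpoch (1 / q ^ N) q m * qpoch A q m * qpoch B q m * q ^ m
            / (qpoch q q m * qpoch (A * B * y) q m * qpoch (q / (y * q ^ N)) q m)) * (qpoch (A * B * y) q N * qpoch y q N)
      = qpoch (A * y) q N * qpoch (B * y) q N"
    unfolding sum_distrib_right q_Saalschuetz_qbinom[symmetric] by (intro sum.cong refl) (rule summand, simp)
  then show ?thesis
    using assms(2,3) by (simp add: field_simps)
qed

lemma terminating_q_binomial:
  "(\<Sum>j\<le>k. qpoch (1 / q ^ k) q j * (z * q ^ k) ^ j / qpoch q q j) = qpoch z q k"
proof -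
  have summand: "qpoch (1 / q ^ k) q j * (z * q ^ k) ^ j / qpoch q q j = qbinom q k j * (-z) ^ j * q ^ tri j"
    if "j \<le> k" for j
  proof -
    have "(q ^ k) ^ j = q ^ (k * j)"
      by (simp add: power_mult)
    then show ?thesis
      unfolding qpoch_inverse_power[OF that]
      using qpoch_q_nonzero[of j] q_nonzero by (simp add: power_minus[of z] field_simps)
  qed
  then have "(\<Sum>j\<le>k. qpoch (1 / q ^ k) q j * (z * q ^ k) ^ j / qpoch q q j)
      = (\<Sum>j\<le>k. qbinom q k j * (-z) ^ j * q ^ tri j * qpoch 0 q j * qpoch (z * 0 * q ^ j) q (k - j))"
    by (intro sum.cong refl) simp
  then show ?thesis
    by (simp only: qpoch_expansion)
qed

lemma sum_inverse_power_weights_eq_0: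
  assumes "0 < n"
  shows "(\<Sum>k\<le>n. qpoch (1 / q ^ n) q k * q ^ k / qpoch q q k) = 0"
proof -
  have "1 - q / q ^ n * q ^ (n - 1) = 0"
    using assms q_nonzero by (cases n) simp_all
  then have "qpoch (q / q ^ n) q n = 0"
    unfolding qpoch_def using assms by (intro prod_zero) (auto intro!: bexI[of _ "n - 1"])
  then show ?thesis
    using terminating_q_binomial[of n "q / q ^ n"] q_nonzero by (simp add: power_mult_distrib)
qed

lemma qbinom_sum_transformation:
  "(\<Sum>j\<le>i. qbinom q i j * (-1) ^ j * q ^ tri j * qpoch b q j * qpoch c q j * (p * r) ^ j
       * qpoch (p * b * q ^ j) q (i - j) * qpoch (r * c * q ^ j) q (i - j))
   = (\<Sum>j\<le>i. qbinom q i j * qpoch c q j * qpoch p q j * r ^ j * qpoch (p * b * q ^ j) q (i - j) * qpoch r q (i - j))"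
proof -
  define G where "G l j = qpoch c q j * r ^ j * qpoch (p * b * q ^ j) q (i - j) * qpoch r q (i - j)
      * ((-p) ^ l * q ^ tri l * qpoch b q l * qpoch (p * b * q ^ l) q (j - l))" for l j
  have G_factor: "G l (l + m) = (-1) ^ l * q ^ tri l * qpoch b q l * qpoch c q l * (p * r) ^ l * qpoch (p * b * q ^ l) q (i - l)
      * (qpoch (c * q ^ l) q m * qpoch r q (i - l - m) * r ^ m)" if "l + m \<le> i" for l m
  proof -
    have "qpoch (p * b * q ^ l) q m * qpoch (p * b * q ^ (l + m)) q (i - (l + m)) = qpoch (p * b * q ^ l) q (i - l)"
      using qpoch_add[of "p * b * q ^ l" q m "i - (l + m)"] that by (simp add: power_add mult_ac)
    then show ?thesis
      unfolding G_def by (simp add: qpoch_add power_add power_minus[of p] power_mult_distrib algebra_simps)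
  qed
  have "(\<Sum>j\<le>i. qbinom q i j * qpoch c q j * qpoch p q j * r ^ j * qpoch (p * b * q ^ j) q (i - j) * qpoch r q (i - j))
      = (\<Sum>j\<le>i. qbinom q i j * (\<Sum>l\<le>j. qbinom q j l * G l j))"
    unfolding G_def qpoch_expansion[of j p b for j, symmetric]
    by (simp add: sum_distrib_left sum_distrib_right mult_ac)
  also have "\<dots> = (\<Sum>l\<le>i. \<Sum>m\<le>i - l. qbinom q i l * qbinom q (i - l) m * G l (l + m))"
    by (rule sum_qbinom_nested[symmetric])
  also have "\<dots> = (\<Sum>l\<le>i. qbinom q i l * (-1) ^ l * q ^ tri l * qpoch b q l * qpoch c q l * (p * r) ^ l
      * qpoch (p * b * q ^ l) q (i - l) * qpoch (r * c * q ^ l) q (i - l))"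
  proof (intro sum.cong refl)
    fix l
    assume "l \<in> {..i}"
    then have "(\<Sum>m\<le>i - l. qbinom q i l * qbinom q (i - l) m * G l (l + m))
        = qbinom q i l * (-1) ^ l * q ^ tri l * qpoch b q l * qpoch c q l * (p * r) ^ l * qpoch (p * b * q ^ l) q (i - l)
          * (\<Sum>m\<le>i - l. qbinom q (i - l) m * qpoch (c * q ^ l) q m * qpoch r q (i - l - m) * r ^ m)"
      unfolding sum_distrib_left by (intro sum.cong refl) (simp add: G_factor mult_ac)
    then show "(\<Sum>m\<le>i - l. qbinom q i l * qbinom q (i - l) m * G l (l + m))
        = qbinom q i l * (-1) ^ l * q ^ tri l * qpoch b q l * qpoch c q l * (p * r) ^ l
          * qpoch (p * b * q ^ l) q (i - l) * qpoch (r * c * q ^ l) q (i - l)"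
      using q_Vandermonde[of "i - l" "c * q ^ l" r] by (simp add: mult_ac)
  qed
  finally show ?thesis ..
qed

lemma qbinom_sum_transformation_swap:
  assumes "p * b = r' * c" "r * c = p' * b" "p * r = p' * r'"
  shows "(\<Sum>j\<le>i. qbinom q i j * qpoch c q j * qpoch p q j * r ^ j * qpoch (p * b * q ^ j) q (i - j) * qpoch r q (i - j))
   = (\<Sum>j\<le>i. qbinom q i j * qpoch c q j * qpoch p' q j * r' ^ j * qpoch (p' * b * q ^ j) q (i - j) * qpoch r' q (i - j))"
  unfolding qbinom_sum_transformation[symmetric] unfolding assms by (simp add: mult_ac)

lemma phi32_as_qbinom_sum:
  assumes "qpoch d q i \<noteq> 0" "qpoch e q i \<noteq> 0"
  shows "qpoch d q i * qpoch e q i * phi32 q i x y d e (z * q ^ i)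
    = (\<Sum>j\<le>i. qbinom q i j * (-1) ^ j * q ^ tri j * qpoch x q j * qpoch y q j * z ^ j
        * qpoch (d * q ^ j) q (i - j) * qpoch (e * q ^ j) q (i - j))"
  unfolding phi32_def sum_distrib_left
proof (intro sum.cong refl)
  fix j
  assume "j \<in> {..i}"
  then have "j \<le> i"
    by simp
  have d: "qpoch d q i = qpoch d q j * qpoch (d * q ^ j) q (i - j)"
    and e: "qpoch e q i = qpoch e q j * qpoch (e * q ^ j) q (i - j)"
    using qpoch_split[OF \<open>j \<le> i\<close>] by blast+
  have zq: "(z * q ^ i) ^ j = z ^ j * q ^ (i * j)"
    by (simp add: power_mult_distrib power_mult)
  have "qpoch d q j \<noteq> 0" "qpoch e q j \<noteq> 0"
    using assms d e by auto
  then show "qpoch d q i * qpoch e q i * (qpoch (1 / q ^ i) q j * qpoch x q j * qpoch y q j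
        / (qpoch q q j * qpoch d q j * qpoch e q j) * (z * q ^ i) ^ j)
      = qbinom q i j * (-1) ^ j * q ^ tri j * qpoch x q j * qpoch y q j * z ^ j
        * qpoch (d * q ^ j) q (i - j) * qpoch (e * q ^ j) q (i - j)"
    unfolding qpoch_inverse_power[OF \<open>j \<le> i\<close>] d e zq
    using qpoch_q_nonzero[of j] q_nonzero by (simp add: field_simps)
qed

lemma qbinom_sum_Vandermonde_split:
  assumes "x * y = r"
  shows "(\<Sum>j\<le>i. qbinom q i j * qpoch c q j * qpoch p q j * r ^ j * qpoch (d * q ^ j) q (i - j) * qpoch r q (i - j))
   = (\<Sum>t\<le>i. qbinom q i t * qpoch (d * q ^ t) q (i - t) * qpoch y q (i - t)
       * (\<Sum>j\<le>t. qbinom q t j * qpoch c q j * qpoch p q j * r ^ j * qpoch x q (t - j) * y ^ (t - j) * qpoch (d * q ^ j) q (t - j)))"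
proof -
  define H where "H j t = qpoch c q j * qpoch p q j * r ^ j * qpoch (d * q ^ j) q (i - j)
      * qpoch x q (t - j) * qpoch y q (i - t) * y ^ (t - j)" for j t
  have H_factor: "H j t = qpoch (d * q ^ t) q (i - t) * qpoch y q (i - t)
      * (qpoch c q j * qpoch p q j * r ^ j * qpoch x q (t - j) * y ^ (t - j) * qpoch (d * q ^ j) q (t - j))"
    if "j \<le> t" "t \<le> i" for j t
  proof -
    have "qpoch (d * q ^ j) q (i - j) = qpoch (d * q ^ j) q (t - j) * qpoch (d * q ^ t) q (i - t)"
      using qpoch_add[of "d * q ^ j" q "t - j" "i - t"] that by (simp add: mult.assoc flip: power_add)
    then show ?thesis
      unfolding H_def by (simp add: mult_ac)
  qed
  have "(\<Sum>j\<le>i. qbinom q i j * qpoch c q j * qpoch p q j * r ^ j * qpoch (d * q ^ j) q (i - j) * qpoch r q (i - j))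
      = (\<Sum>j\<le>i. \<Sum>l\<le>i - j. qbinom q i j * qbinom q (i - j) l * H j (j + l))"
  proof -
    have "qpoch r q (i - j) = (\<Sum>l\<le>i - j. qbinom q (i - j) l * qpoch x q l * qpoch y q (i - j - l) * y ^ l)" for j
      using q_Vandermonde[of "i - j" x y] assms by simp
    then show ?thesis
      unfolding H_def by (simp add: sum_distrib_left mult_ac)
  qed
  also have "\<dots> = (\<Sum>t\<le>i. qbinom q i t * (\<Sum>j\<le>t. qbinom q t j * H j t))"
    by (rule sum_qbinom_nested)
  also have "\<dots> = (\<Sum>t\<le>i. qbinom q i t * qpoch (d * q ^ t) q (i - t) * qpoch y q (i - t)
       * (\<Sum>j\<le>t. qbinom q t j * qpoch c q j * qpoch p q j * r ^ j * qpoch x q (t - j) * y ^ (t - j) * qpoch (d * q ^ j) q (t - j)))"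
  proof (intro sum.cong refl)
    fix t
    assume "t \<in> {..i}"
    then show "qbinom q i t * (\<Sum>j\<le>t. qbinom q t j * H j t) = qbinom q i t * qpoch (d * q ^ t) q (i - t) * qpoch y q (i - t)
       * (\<Sum>j\<le>t. qbinom q t j * qpoch c q j * qpoch p q j * r ^ j * qpoch x q (t - j) * y ^ (t - j) * qpoch (d * q ^ j) q (t - j))"
      unfolding sum_distrib_left by (intro sum.cong refl) (simp add: H_factor mult_ac)
  qed
  finally show ?thesis .
qed

lemma phi32_qbinom_expansion:
  assumes "p * b = d" "r * c = e" "p * r = z" "x * y = r"
    and "qpoch d q i \<noteq> 0" "qpoch e q i \<noteq> 0"
  shows "qpoch d q i * qpoch e q i * phi32 q i b c d e (z * q ^ i)
   = (\<Sum>t\<le>i. qbinom q i t * qpoch (d * q ^ t) q (i - t) * qpoch y q (i - t)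
       * (\<Sum>j\<le>t. qbinom q t j * qpoch c q j * qpoch p q j * r ^ j * qpoch x q (t - j) * y ^ (t - j) * qpoch (d * q ^ j) q (t - j)))"
proof -
  have "(\<Sum>j\<le>i. qbinom q i j * (-1) ^ j * q ^ tri j * qpoch b q j * qpoch c q j * z ^ j
        * qpoch (d * q ^ j) q (i - j) * qpoch (e * q ^ j) q (i - j))
      = (\<Sum>j\<le>i. qbinom q i j * qpoch c q j * qpoch p q j * r ^ j * qpoch (d * q ^ j) q (i - j) * qpoch r q (i - j))"
    using qbinom_sum_transformation[of i b c p r] unfolding assms(1-3) .
  then show ?thesis
    unfolding phi32_as_qbinom_sum[OF assms(5,6)] by (simp only: qbinom_sum_Vandermonde_split[OF assms(4)])
qed

(* The two sums are the coefficients that phi32_qbinom_expansion produces for the two sides of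
   the main identity; by qbinom_sum_transformation both reduce to one and the same sum. *)
lemma phi32_expansion_coefficients_rescale:
  assumes "u \<noteq> 0" "v \<noteq> 0" "c \<noteq> 0"
  shows "(\<Sum>j\<le>t. qbinom q t j * qpoch (1 / v) q j * qpoch (\<beta> * u) q j * (\<gamma> * v) ^ j
        * qpoch (c / u) q (t - j) * (\<gamma> * u * v / c) ^ (t - j) * qpoch (\<beta> * q ^ j) q (t - j))
   = (1 / c) ^ t * (\<Sum>j\<le>t. qbinom q t j * qpoch (c / v) q j * qpoch (\<beta> * u) q j * (\<gamma> * v) ^ j
        * qpoch (1 / u) q (t - j) * (\<gamma> * u * v) ^ (t - j) * qpoch (\<beta> * c * q ^ j) q (t - j))"
proof -
  have "1 / v * (\<beta> * v) = 1 / u * (\<beta> * u)" "c / u * (\<beta> * u) = c / v * (\<beta> * v)" "1 / v * (c / u) = c / v * (1 / u)"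
    using assms by (simp_all add: field_simps)
  note swap = qbinom_sum_transformation_swap[OF this, of t]
  have "1 / v * (\<beta> * v) = \<beta>" "c / v * (\<beta> * v) = \<beta> * c"
    using assms by (simp_all add: field_simps)
  note swap = swap[unfolded this]
  have "\<gamma> * u * v / c * (c / u) = \<gamma> * v" "\<gamma> * u * v * (1 / u) = \<gamma> * v"
    using assms by (simp_all add: field_simps)
  note pow = power_mult_power_diff[of _ _ "\<gamma> * u * v / c", OF _ this(1)] power_mult_power_diff[of _ _ "\<gamma> * u * v", OF _ this(2)]
  have rescaled: "(\<gamma> * u * v) ^ t * (\<Sum>j\<le>t. qbinom q t j * qpoch (\<beta> * u) q j * qpoch (c / v) q j * (1 / u) ^ j
        * qpoch (\<beta> * c * q ^ j) q (t - j) * qpoch (1 / u) q (t - j))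
    = (\<Sum>j\<le>t. qbinom q t j * qpoch (c / v) q j * qpoch (\<beta> * u) q j * (\<gamma> * v) ^ j
        * qpoch (1 / u) q (t - j) * (\<gamma> * u * v) ^ (t - j) * qpoch (\<beta> * c * q ^ j) q (t - j))"
    unfolding sum_distrib_left by (intro sum.cong refl) (use pow(2) in \<open>simp add: mult_ac\<close>)
  have "(\<Sum>j\<le>t. qbinom q t j * qpoch (1 / v) q j * qpoch (\<beta> * u) q j * (\<gamma> * v) ^ j
        * qpoch (c / u) q (t - j) * (\<gamma> * u * v / c) ^ (t - j) * qpoch (\<beta> * q ^ j) q (t - j))
      = (\<gamma> * u * v / c) ^ t * (\<Sum>j\<le>t. qbinom q t j * qpoch (\<beta> * u) q j * qpoch (1 / v) q j * (c / u) ^ j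
        * qpoch (\<beta> * q ^ j) q (t - j) * qpoch (c / u) q (t - j))"
    unfolding sum_distrib_left by (intro sum.cong refl) (use pow(1) in \<open>simp add: mult_ac\<close>)
  also have "\<dots> = (1 / c) ^ t * ((\<gamma> * u * v) ^ t * (\<Sum>j\<le>t. qbinom q t j * qpoch (\<beta> * u) q j * qpoch (c / v) q j * (1 / u) ^ j
        * qpoch (\<beta> * c * q ^ j) q (t - j) * qpoch (1 / u) q (t - j)))"
    unfolding swap by (simp add: power_divide)
  finally show ?thesis
    unfolding rescaled .
qed

lemma qbinom_transform_basis:
  assumes "c \<noteq> 0" "t \<le> k" "qpoch w q k \<noteq> 0" "X * Y = c * w * q ^ t"
  shows "qbinom_transform q c (\<lambda>i. qbinom q i t * qpoch X q (i - t) * qpoch Y q (i - t) / qpoch w q i) k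
    = (1 / c) ^ t * qbinom q k t * qpoch (X / c) q (k - t) * qpoch (Y / c) q (k - t) / qpoch w q k"
proof -
  define M where "M = k - t"
  have summand: "qbinom q k (t + m) * qpoch (1 / c) q (k - (t + m)) * (1 / c) ^ (t + m)
        * (qbinom q (t + m) t * qpoch X q m * qpoch Y q m / qpoch w q (t + m))
      = (1 / c) ^ t * qbinom q k t / qpoch w q k
        * (qbinom q M m * qpoch X q m * qpoch Y q m * qpoch (X * Y * (1 / c) * q ^ m) q (M - m) * qpoch (1 / c) q (M - m) * (1 / c) ^ m)"
    if "m \<le> M" for m
  proof -
    have "X * Y * (1 / c) * q ^ m = w * q ^ (t + m)"
      using assms(1,4) by (simp add: field_simps power_add)
    then have w_k: "qpoch w q k = qpoch w q (t + m) * qpoch (X * Y * (1 / c) * q ^ m) q (M - m)"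
      using qpoch_add[of w q "t + m" "M - m"] that M_def assms(2) by simp
    moreover have "qbinom q k (t + m) * qbinom q (t + m) t = qbinom q k t * qbinom q M m"
      using qbinom_mult[of t "t + m" k] that M_def assms(2) by simp
    moreover have "k - (t + m) = M - m"
      using M_def by simp
    ultimately show ?thesis
      using assms(3) by (simp add: power_add field_simps)
  qed
  have "qbinom_transform q c (\<lambda>i. qbinom q i t * qpoch X q (i - t) * qpoch Y q (i - t) / qpoch w q i) k
      = (\<Sum>m\<le>M. qbinom q k (t + m) * qpoch (1 / c) q (k - (t + m)) * (1 / c) ^ (t + m)
          * (qbinom q (t + m) t * qpoch X q m * qpoch Y q m / qpoch w q (t + m)))"
    unfolding qbinom_transform_def M_def by (subst sum_atMost_vanishing_prefix[OF assms(2)]) simp_all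
  also have "\<dots> = (1 / c) ^ t * qbinom q k t / qpoch w q k * (qpoch (X * (1 / c)) q M * qpoch (Y * (1 / c)) q M)"
    unfolding q_Saalschuetz_qbinom[symmetric] sum_distrib_left by (intro sum.cong refl) (rule summand, simp)
  finally show ?thesis
    using M_def by simp
qed

lemma qbinom_transform_phi32:
  assumes "u \<noteq> 0" "v \<noteq> 0" "c \<noteq> 0"
    and "qpoch (\<beta> * \<gamma> * u * v) q k \<noteq> 0" "qpoch (\<beta> * c) q k \<noteq> 0" "qpoch (\<gamma> * c) q k \<noteq> 0"
    and "qpoch \<beta> q k \<noteq> 0" "qpoch \<gamma> q k \<noteq> 0"
  shows "qbinom_transform q c (\<lambda>i. qpoch (\<beta> * c) q i * qpoch (\<gamma> * c) q i / qpoch (\<beta> * \<gamma> * u * v) q i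
        * phi32 q i (c / u) (c / v) (\<beta> * c) (\<gamma> * c) (\<beta> * \<gamma> * u * v * q ^ i)) k
    = qpoch \<beta> q k * qpoch \<gamma> q k / qpoch (\<beta> * \<gamma> * u * v) q k
        * phi32 q k (1 / u) (1 / v) \<beta> \<gamma> (\<beta> * \<gamma> * u * v * q ^ k)"
proof -
  let ?w = "\<beta> * \<gamma> * u * v"
  define E where "E t = (\<Sum>j\<le>t. qbinom q t j * qpoch (c / v) q j * qpoch (\<beta> * u) q j * (\<gamma> * v) ^ j
      * qpoch (1 / u) q (t - j) * (\<gamma> * u * v) ^ (t - j) * qpoch (\<beta> * c * q ^ j) q (t - j))" for t
  define B where "B t i = qbinom q i t * qpoch (\<beta> * c * q ^ t) q (i - t) * qpoch (\<gamma> * u * v) q (i - t) / qpoch ?w q i" for t i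
  have params: "\<beta> * u * (c / u) = \<beta> * c" "\<gamma> * v * (c / v) = \<gamma> * c" "\<beta> * u * (\<gamma> * v) = ?w"
    "1 / u * (\<gamma> * u * v) = \<gamma> * v" "\<beta> * u * (1 / u) = \<beta>" "\<gamma> * v * (1 / v) = \<gamma>" "c / u * (\<gamma> * u * v / c) = \<gamma> * v"
    using assms(1-3) by (simp_all add: field_simps)
  have expand_f: "qpoch (\<beta> * c) q i * qpoch (\<gamma> * c) q i / qpoch ?w q i * phi32 q i (c / u) (c / v) (\<beta> * c) (\<gamma> * c) (?w * q ^ i)
      = (\<Sum>t\<le>k. B t i * E t)" if "i \<le> k" for i
  proof -
    have "qpoch (\<beta> * c) q i * qpoch (\<gamma> * c) q i * phi32 q i (c / u) (c / v) (\<beta> * c) (\<gamma> * c) (?w * q ^ i)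
        = (\<Sum>t\<le>i. qbinom q i t * qpoch (\<beta> * c * q ^ t) q (i - t) * qpoch (\<gamma> * u * v) q (i - t) * E t)"
      unfolding E_def
      by (intro phi32_qbinom_expansion params qpoch_nonzero_le[OF assms(5) that] qpoch_nonzero_le[OF assms(6) that])
    also have "\<dots> = (\<Sum>t\<le>k. qbinom q i t * qpoch (\<beta> * c * q ^ t) q (i - t) * qpoch (\<gamma> * u * v) q (i - t) * E t)"
      using that by (intro sum.mono_neutral_left) auto
    finally show ?thesis
      unfolding B_def by (simp add: sum_divide_distrib)
  qed
  have "qbinom_transform q c (\<lambda>i. qpoch (\<beta> * c) q i * qpoch (\<gamma> * c) q i / qpoch ?w q i
        * phi32 q i (c / u) (c / v) (\<beta> * c) (\<gamma> * c) (?w * q ^ i)) k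
      = (\<Sum>t\<le>k. qbinom_transform q c (B t) k * E t)"
    by (simp only: qbinom_transform_cong[of k _ "\<lambda>i. \<Sum>t\<le>k. B t i * E t"] expand_f qbinom_transform_linear)
  also have "\<dots> = (\<Sum>t\<le>k. qbinom q k t * qpoch (\<beta> * q ^ t) q (k - t) * qpoch (\<gamma> * u * v / c) q (k - t) / qpoch ?w q k
      * ((1 / c) ^ t * E t))"
  proof (intro sum.cong refl)
    fix t
    assume "t \<in> {..k}"
    then have "qbinom_transform q c (B t) k
        = (1 / c) ^ t * qbinom q k t * qpoch (\<beta> * c * q ^ t / c) q (k - t) * qpoch (\<gamma> * u * v / c) q (k - t) / qpoch ?w q k"
      unfolding B_def using assms(3,4) by (intro qbinom_transform_basis) (auto simp: mult_ac)
    then show "qbinom_transform q c (B t) k * E t = qbinom q k t * qpoch (\<beta> * q ^ t) q (k - t)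
        * qpoch (\<gamma> * u * v / c) q (k - t) / qpoch ?w q k * ((1 / c) ^ t * E t)"
      using assms(3) by simp
  qed
  also have "\<dots> = qpoch \<beta> q k * qpoch \<gamma> q k * phi32 q k (1 / u) (1 / v) \<beta> \<gamma> (?w * q ^ k) / qpoch ?w q k"
    unfolding E_def phi32_expansion_coefficients_rescale[OF assms(1-3), symmetric] sum_divide_distrib
    using assms(7,8) by (subst phi32_qbinom_expansion[OF params(5,6,3,7)]) (simp_all add: sum_divide_distrib mult_ac)
  finally show ?thesis
    by simp
qed

lemma qweight_shifted_sum:
  assumes "i \<le> n" "c \<noteq> 0" "b \<noteq> 0" "c = \<alpha> * a * b / q"
    and "qpoch (q / a) q n \<noteq> 0" "qpoch (q / b) q n \<noteq> 0"
  shows "(\<Sum>m\<le>n - i. qweight q n \<alpha> (q / a) (q / b) (i + m) * qbinom q (i + m) i * qpoch (1 / c) q m)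
    = qweight q n \<alpha> (q / a) (q / b) i * qpoch (\<alpha> * b * q ^ i) q (n - i) * qpoch (q / (\<alpha> * a * q ^ n)) q (n - i)
      / (qpoch (q / a * q ^ i) q (n - i) * qpoch (b / q ^ n) q (n - i))"
proof -
  define N A B y where "N = n - i" and "A = \<alpha> * q ^ n * q ^ i" and "B = 1 / c" and "y = b / q ^ n"
  have n: "n = i + N"
    using assms(1) N_def by simp
  have y: "y \<noteq> 0"
    using assms(3) q_nonzero y_def by simp
  have ABy: "q / a * q ^ i = A * B * y" and qy: "q / b * q ^ i = q / (y * q ^ N)" and qN: "1 / q ^ n * q ^ i = 1 / q ^ N"
    and Ay: "A * y = \<alpha> * b * q ^ i" and By: "B * y = q / (\<alpha> * a * q ^ n)"
    unfolding A_def B_def y_def assms(4) using assms(2-4) q_nonzero n by (auto simp: field_simps power_add)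
  have split_a: "qpoch (q / a) q n = qpoch (q / a) q i * qpoch (A * B * y) q N"
    and split_b: "qpoch (q / b) q n = qpoch (q / b) q i * qpoch (q / (y * q ^ N)) q N"
    using qpoch_add[of "q / a" q i N] qpoch_add[of "q / b" q i N] ABy qy n by simp_all
  have nonzero: "qpoch (q / a) q i \<noteq> 0" "qpoch (q / b) q i \<noteq> 0"
      "qpoch (A * B * y) q N \<noteq> 0" "qpoch (q / (y * q ^ N)) q N \<noteq> 0"
    using assms(5,6) split_a split_b by auto
  have "qpoch y q N \<noteq> 0"
    using qpoch_reflect[of N N y] nonzero(4) y q_nonzero by auto
  have summand: "qweight q n \<alpha> (q / a) (q / b) (i + m) * qbinom q (i + m) i * qpoch (1 / c) q m
      = qweight q n \<alpha> (q / a) (q / b) i * (qpoch (1 / q ^ N) q m * qpoch A q m * qpoch B q m * q ^ m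
        / (qpoch q q m * qpoch (A * B * y) q m * qpoch (q / (y * q ^ N)) q m))" if "m \<le> N" for m
  proof -
    have "qpoch (A * B * y) q m \<noteq> 0" "qpoch (q / (y * q ^ N)) q m \<noteq> 0"
      using qpoch_nonzero_le[OF nonzero(3) that] qpoch_nonzero_le[OF nonzero(4) that] by simp_all
    moreover have "qpoch q q (i + m) \<noteq> 0" "qpoch q q i \<noteq> 0" "qpoch q q m \<noteq> 0"
      by (rule qpoch_q_nonzero)+
    moreover have "qpoch (1 / q ^ n) q (i + m) = qpoch (1 / q ^ n) q i * qpoch (1 / q ^ N) q m"
        "qpoch (\<alpha> * q ^ n) q (i + m) = qpoch (\<alpha> * q ^ n) q i * qpoch A q m"
        "qpoch (q / a) q (i + m) = qpoch (q / a) q i * qpoch (A * B * y) q m"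
        "qpoch (q / b) q (i + m) = qpoch (q / b) q i * qpoch (q / (y * q ^ N)) q m"
      unfolding qpoch_add ABy qy qN A_def by simp_all
    ultimately show ?thesis
      unfolding qweight_def qbinom_def B_def using nonzero(1,2) by (simp add: field_simps power_add)
  qed
  have "(\<Sum>m\<le>n - i. qweight q n \<alpha> (q / a) (q / b) (i + m) * qbinom q (i + m) i * qpoch (1 / c) q m)
      = qweight q n \<alpha> (q / a) (q / b) i * (qpoch (A * y) q N * qpoch (B * y) q N / (qpoch (A * B * y) q N * qpoch y q N))"
    unfolding q_Saalschuetz[OF y nonzero(3) \<open>qpoch y q N \<noteq> 0\<close>, symmetric] sum_distrib_left N_def[symmetric]
    by (intro sum.cong refl) (rule summand, simp)
  then show ?thesis
    unfolding Ay By ABy[symmetric] by (simp add: y_def N_def)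
qed

lemma qweight_kernel:
  assumes "i \<le> n" "\<alpha> \<noteq> 0" "a \<noteq> 0" "b \<noteq> 0" "c = \<alpha> * a * b / q"
    and "qpoch (q / a) q n \<noteq> 0" "qpoch (q / b) q n \<noteq> 0" "qpoch (\<alpha> * a) q n \<noteq> 0" "qpoch (\<alpha> * b) q n \<noteq> 0"
  shows "qpoch (q / a) q n * qpoch (q / b) q n / (qpoch (\<alpha> * a) q n * qpoch (\<alpha> * b) q n) * c ^ n * (1 / c) ^ i
      * (\<Sum>m\<le>n - i. qweight q n \<alpha> (q / a) (q / b) (i + m) * qbinom q (i + m) i * qpoch (1 / c) q m)
    = qweight q n \<alpha> (\<alpha> * a) (\<alpha> * b) i"
proof -
  define N where "N = n - i"
  have n: "n = i + N"
    using assms(1) N_def by simp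
  have c: "c \<noteq> 0"
    using assms(2-5) q_nonzero by simp
  have "qpoch (q / a) q n = qpoch (q / a) q i * qpoch (q / a * q ^ i) q N"
    and "qpoch (q / b) q n = qpoch (q / b) q i * qpoch (q / b * q ^ i) q N"
    and "qpoch (\<alpha> * a) q n = qpoch (\<alpha> * a) q i * qpoch (\<alpha> * a * q ^ i) q N"
    and "qpoch (\<alpha> * b) q n = qpoch (\<alpha> * b) q i * qpoch (\<alpha> * b * q ^ i) q N"
    unfolding n qpoch_add by simp_all
  note splits = this
  have nonzero: "qpoch (q / a) q i \<noteq> 0" "qpoch (q / a * q ^ i) q N \<noteq> 0" "qpoch (q / b) q i \<noteq> 0"
      "qpoch (q / b * q ^ i) q N \<noteq> 0" "qpoch (\<alpha> * a) q i \<noteq> 0" "qpoch (\<alpha> * a * q ^ i) q N \<noteq> 0"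
      "qpoch (\<alpha> * b) q i \<noteq> 0" "qpoch (\<alpha> * b * q ^ i) q N \<noteq> 0"
    using assms(6-9) unfolding splits by auto
  have "b / q ^ n \<noteq> 0" "\<alpha> * a * q ^ i \<noteq> 0" "q / (b / q ^ n * q ^ N) = q / b * q ^ i"
      "q / (\<alpha> * a * q ^ i * q ^ N) = q / (\<alpha> * a * q ^ n)" "b / q ^ n * (\<alpha> * a * q ^ i) * q ^ N / q = c"
    using assms(2-5) q_nonzero n by (auto simp: field_simps power_add)
  note reflect = qpoch_reflect_product[OF this(1,2), of N, unfolded this(3-5)]
  have "qpoch (b / q ^ n) q N \<noteq> 0"
    using qpoch_reflect[of N N "b / q ^ n"] nonzero(4) assms(4) q_nonzero n by (auto simp: field_simps power_add)
  have "c ^ n = c ^ i * c ^ N"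
    unfolding n power_add ..
  then have "qpoch (q / a) q n * qpoch (q / b) q n / (qpoch (\<alpha> * a) q n * qpoch (\<alpha> * b) q n) * c ^ n * (1 / c) ^ i
      * (\<Sum>m\<le>n - i. qweight q n \<alpha> (q / a) (q / b) (i + m) * qbinom q (i + m) i * qpoch (1 / c) q m)
    = qweight q n \<alpha> (q / a) (q / b) i * qpoch (q / a) q i * qpoch (q / b) q i / (qpoch (\<alpha> * a) q i * qpoch (\<alpha> * b) q i)
      * (qpoch (q / b * q ^ i) q N * qpoch (q / (\<alpha> * a * q ^ n)) q N * c ^ N
        / (qpoch (b / q ^ n) q N * qpoch (\<alpha> * a * q ^ i) q N))"
    unfolding qweight_shifted_sum[OF assms(1) c assms(4,5,6,7)] unfolding N_def[symmetric] splits
    using c nonzero \<open>qpoch (b / q ^ n) q N \<noteq> 0\<close> by (simp add: field_simps)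
  also have "\<dots> = qweight q n \<alpha> (\<alpha> * a) (\<alpha> * b) i"
    unfolding reflect using nonzero \<open>qpoch (b / q ^ n) q N \<noteq> 0\<close> by (simp add: qweight_def field_simps)
  finally show ?thesis .
qed

lemma qweight_sum_qbinom_transform:
  assumes "\<alpha> \<noteq> 0" "a \<noteq> 0" "b \<noteq> 0" "c = \<alpha> * a * b / q"
    and "qpoch (q / a) q n \<noteq> 0" "qpoch (q / b) q n \<noteq> 0" "qpoch (\<alpha> * a) q n \<noteq> 0" "qpoch (\<alpha> * b) q n \<noteq> 0"
  shows "(\<Sum>k\<le>n. qweight q n \<alpha> (\<alpha> * a) (\<alpha> * b) k * h k)
    = qpoch (q / a) q n * qpoch (q / b) q n / (qpoch (\<alpha> * a) q n * qpoch (\<alpha> * b) q n) * c ^ n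
      * (\<Sum>k\<le>n. qweight q n \<alpha> (q / a) (q / b) k * qbinom_transform q c h k)"
proof -
  let ?P = "qpoch (q / a) q n * qpoch (q / b) q n / (qpoch (\<alpha> * a) q n * qpoch (\<alpha> * b) q n) * c ^ n"
  let ?W = "qweight q n \<alpha> (q / a) (q / b)"
  have "(\<Sum>k\<le>n. ?W k * qbinom_transform q c h k)
      = (\<Sum>k\<le>n. \<Sum>i\<le>k. ?W k * qbinom q k i * qpoch (1 / c) q (k - i) * (1 / c) ^ i * h i)"
    unfolding qbinom_transform_def sum_distrib_left by (simp add: mult_ac)
  also have "\<dots> = (\<Sum>i\<le>n. h i * (1 / c) ^ i * (\<Sum>m\<le>n - i. ?W (i + m) * qbinom q (i + m) i * qpoch (1 / c) q m))"
    unfolding sum_atMost_triangle' sum_distrib_left by (intro sum.cong refl) (simp add: mult_ac)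
  finally have swapped: "(\<Sum>k\<le>n. ?W k * qbinom_transform q c h k)
      = (\<Sum>i\<le>n. h i * (1 / c) ^ i * (\<Sum>m\<le>n - i. ?W (i + m) * qbinom q (i + m) i * qpoch (1 / c) q m))" .
  have "?P * (\<Sum>k\<le>n. ?W k * qbinom_transform q c h k)
      = (\<Sum>i\<le>n. h i * (?P * (1 / c) ^ i * (\<Sum>m\<le>n - i. ?W (i + m) * qbinom q (i + m) i * qpoch (1 / c) q m)))"
    unfolding swapped sum_distrib_left[of ?P] by (intro sum.cong refl) (simp only: mult_ac)
  also have "\<dots> = (\<Sum>i\<le>n. qweight q n \<alpha> (\<alpha> * a) (\<alpha> * b) i * h i)"
    using qweight_kernel[OF _ assms] by (intro sum.cong refl) (simp add: mult.commute)
  finally show ?thesis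
    by simp
qed

lemma sum_phi32_transformation:
  assumes "a \<noteq> 0" "b \<noteq> 0" "u \<noteq> 0" "v \<noteq> 0" "c = \<alpha> * a * b / q"
    and "qpoch (\<alpha> * a) q n \<noteq> 0" "qpoch (\<alpha> * b) q n \<noteq> 0" "qpoch (\<beta> * \<gamma> * u * v) q n \<noteq> 0"
    and "qpoch (\<beta> * c) q n \<noteq> 0" "qpoch (\<gamma> * c) q n \<noteq> 0" "qpoch (q / a) q n \<noteq> 0" "qpoch (q / b) q n \<noteq> 0"
    and "qpoch \<beta> q n \<noteq> 0" "qpoch \<gamma> q n \<noteq> 0"
  shows "(\<Sum>k\<le>n. qweight q n \<alpha> (\<alpha> * a) (\<alpha> * b) k * (qpoch (\<beta> * c) q k * qpoch (\<gamma> * c) q k / qpoch (\<beta> * \<gamma> * u * v) q k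
        * phi32 q k (c / u) (c / v) (\<beta> * c) (\<gamma> * c) (\<beta> * \<gamma> * u * v * q ^ k)))
    = qpoch (q / a) q n * qpoch (q / b) q n / (qpoch (\<alpha> * a) q n * qpoch (\<alpha> * b) q n) * c ^ n
      * (\<Sum>k\<le>n. qweight q n \<alpha> (q / a) (q / b) k * (qpoch \<beta> q k * qpoch \<gamma> q k / qpoch (\<beta> * \<gamma> * u * v) q k
        * phi32 q k (1 / u) (1 / v) \<beta> \<gamma> (\<beta> * \<gamma> * u * v * q ^ k)))"
proof (cases "\<alpha> = 0")
  case False
  then have "c \<noteq> 0"
    using assms(1,2,5) q_nonzero by simp
  show ?thesis
    unfolding qweight_sum_qbinom_transform[OF False assms(1,2,5,11,12,6,7)]
    using assms(3,4) \<open>c \<noteq> 0\<close> assms(8-10,13,14)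
    by (intro arg_cong[where f = "\<lambda>x. _ * x"] sum.cong refl arg_cong[where f = "\<lambda>x. _ * x"]
        qbinom_transform_phi32) (auto dest: qpoch_nonzero_le)
next
  case True
  then have "c = 0"
    using assms(5) by simp
  have "phi32 q k 0 0 0 0 (\<beta> * \<gamma> * u * v * q ^ k) = qpoch (\<beta> * \<gamma> * u * v) q k" for k
    using terminating_q_binomial[of k "\<beta> * \<gamma> * u * v"] by (simp add: phi32_def)
  moreover have "qpoch (\<beta> * \<gamma> * u * v) q k \<noteq> 0" if "k \<le> n" for k
    using qpoch_nonzero_le[OF assms(8) that] .
  ultimately have "(\<Sum>k\<le>n. qweight q n \<alpha> (\<alpha> * a) (\<alpha> * b) k * (qpoch (\<beta> * c) q k * qpoch (\<gamma> * c) q k / qpoch (\<beta> * \<gamma> * u * v) q k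
        * phi32 q k (c / u) (c / v) (\<beta> * c) (\<gamma> * c) (\<beta> * \<gamma> * u * v * q ^ k)))
      = (\<Sum>k\<le>n. qpoch (1 / q ^ n) q k * q ^ k / qpoch q q k)"
    unfolding \<open>c = 0\<close> True by (intro sum.cong refl) (simp add: qweight_def)
  then show ?thesis
    using sum_inverse_power_weights_eq_0[of n] \<open>c = 0\<close>
    by (cases "n = 0") (simp_all add: qweight_def phi32_def)
qed

end

theorem theorem3p7:
  fixes q \<alpha> a b \<beta> \<gamma> u v :: complex and n :: nat
  assumes "0 < cmod q" "cmod q < 1"
    and "a \<noteq> 0" "b \<noteq> 0" "u \<noteq> 0" "v \<noteq> 0"
    and "qpoch (\<alpha> * a) q n \<noteq> 0" "qpoch (\<alpha> * b) q n \<noteq> 0"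
    and "qpoch (\<beta> * \<gamma> * u * v) q n \<noteq> 0"
    and "qpoch (\<alpha> * \<beta> * a * b / q) q n \<noteq> 0" "qpoch (\<alpha> * \<gamma> * a * b / q) q n \<noteq> 0"
    and "qpoch (q / a) q n \<noteq> 0" "qpoch (q / b) q n \<noteq> 0"
    and "qpoch \<beta> q n \<noteq> 0" "qpoch \<gamma> q n \<noteq> 0"
  shows "(\<Sum>k=0..n.
      qpochs [1 / q ^ n, \<alpha> * q ^ n, \<alpha> * \<beta> * a * b / q, \<alpha> * \<gamma> * a * b / q] q k * q ^ k
      / qpochs [q, \<alpha> * a, \<alpha> * b, \<beta> * \<gamma> * u * v] q k
      * bhs [1 / q ^ k, \<alpha> * a * b / (q * u), \<alpha> * a * b / (q * v)]
            [\<alpha> * \<beta> * a * b / q, \<alpha> * \<gamma> * a * b / q] q (\<beta> * \<gamma> * u * v * q ^ k))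
   = qpochs [q / a, q / b] q n / qpochs [\<alpha> * a, \<alpha> * b] q n * (\<alpha> * a * b / q) ^ n
     * (\<Sum>k=0..n.
      qpochs [1 / q ^ n, \<alpha> * q ^ n, \<beta>, \<gamma>] q k * q ^ k
      / qpochs [q, q / a, q / b, \<beta> * \<gamma> * u * v] q k
      * bhs [1 / q ^ k, 1 / u, 1 / v] [\<beta>, \<gamma>] q (\<beta> * \<gamma> * u * v * q ^ k))"
proof -
  interpret q_base q
    using assms(1,2) by unfold_locales (auto simp: qpoch_q_nonzero_if_norm_less_1)
  define c where "c = \<alpha> * a * b / q"
  have params: "\<alpha> * \<beta> * a * b / q = \<beta> * c" "\<alpha> * \<gamma> * a * b / q = \<gamma> * c"
    "\<alpha> * a * b / (q * u) = c / u" "\<alpha> * a * b / (q * v) = c / v"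
    unfolding c_def by (simp_all add: field_simps)
  have "qpoch (\<beta> * c) q n \<noteq> 0" "qpoch (\<gamma> * c) q n \<noteq> 0"
    using assms(10,11) unfolding params .
  note transformation = sum_phi32_transformation[OF assms(3-6) c_def assms(7-9) this assms(12-15)]
  show ?thesis
    unfolding atLeast0AtMost bhs_eq_phi32[OF q_nonzero] params
    using transformation by (simp add: qpochs_def qweight_def c_def mult_ac)
qed

end
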